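(* Let $A^+,A^-\in\mathbb{R}_{\max}^{m\times n}$, $C\in\mathbb{R}_{\max}^{p\times n}$, $\mu^+\in\mathbb{Z}_{\ge0}^p$, $\mu^-\in\mathbb{Z}_{\ge0}^n$ satisfy the standing assumptions below, and let $f$ and $S$ be as defined below. If $x\in S\cap\mathbb{R}^n$ is not a local optimum, then there exist $J\subset[n]$ and $\delta'>0$ such that $x+\delta\chi_J\in S$ and $f(x+\delta\chi_J)<f(x)$ for all $0<\delta<\delta'$.
   Context: $\mathbb{R}_{\max}=\mathbb{R}\cup\{-\infty\}$, $[n]=\{1,\dots,n\}$, and $\chi_J\in\{0,1\}^n$ is the indicator vector of $J$. Write $A^\pm=(a^\pm_{i,j})$, $C=(c_{k,j})$, and $A=(a_{i,j})$ with $a_{i,j}=\max(a^+_{i,j},a^-_{i,j})$. The objective is $f(x)=\sum_{k=1}^p\mu^+_k\max_{j\in[n]}(c_{k,j}+x_j)-\sum_{j=1}^n\mu^-_jx_j$, and the feasible set is $S=\{x\in\mathbb{R}_{\max}^n:\max_j(a^+_{i,j}+x_j)\ge\max_j(a^-_{i,j}+x_j)\text{ for all }i\in[m]\}$. Standing assumptions: every row of $A$ and of $C$ contains a finite entry; $\sum_{k}\mu^+_k=\sum_j\mu^-_j$; the undirected graph with vertex set $\{u_1,\dots,u_p\}\cup[n]\cup\{w_1,\dots,w_m\}$ and edges $\{u_k,j\}$ for $c_{k,j}\ne-\infty$ and $\{w_i,j\}$ for $a_{i,j}\ne-\infty$ is connected. A point $x\in S\cap\mathbb{R}^n$ is a local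 optimum if there is $\delta>0$ such that $f(y)\ge f(x)$ for all $y\in S\cap\mathbb{R}^n$ with $\max_j|x_j-y_j|<\delta$. *)

theory Defs
  imports "HOL-Analysis.Analysis" "HOL-Library.Extended_Real"
begin

text \<open>Tropical (max-plus) data: elements of R_max = R \<union> {-\<infinity>} are represented as
  extended reals different from +\<infinity>. Matrices are functions nat \<Rightarrow> nat \<Rightarrow> ereal,
  indices 0..<m, 0..<n, 0..<p (0-based instead of 1-based). Real vectors are nat \<Rightarrow> real,
  only coordinates j < n matter.\<close>

definition in_Rmax :: "ereal \<Rightarrow> bool" where
  "in_Rmax a \<longleftrightarrow> a \<noteq> PInfty"

definition trow :: "nat \<Rightarrow> (nat \<Rightarrow> nat \<Rightarrow> ereal) \<Rightarrow> nat \<Rightarrow> (nat \<Rightarrow> real) \<Rightarrow> ereal" where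
  "trow n M i x = Max ((\<lambda>j. M i j + ereal (x j)) ` {..<n})"

definition inS :: "nat \<Rightarrow> nat \<Rightarrow> (nat \<Rightarrow> nat \<Rightarrow> ereal) \<Rightarrow> (nat \<Rightarrow> nat \<Rightarrow> ereal)
    \<Rightarrow> (nat \<Rightarrow> real) \<Rightarrow> bool" where
  "inS m n Ap Am x \<longleftrightarrow> (\<forall>i<m. trow n Ap i x \<ge> trow n Am i x)"

definition fobj :: "nat \<Rightarrow> nat \<Rightarrow> (nat \<Rightarrow> nat \<Rightarrow> ereal) \<Rightarrow> (nat \<Rightarrow> nat) \<Rightarrow> (nat \<Rightarrow> nat)
    \<Rightarrow> (nat \<Rightarrow> real) \<Rightarrow> ereal" where
  "fobj p n C mup mum x =
     (\<Sum>k<p. ereal (real (mup k)) * trow n C k x) - ereal (\<Sum>j<n. real (mum j) * x j)"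

definition Amax :: "(nat \<Rightarrow> nat \<Rightarrow> ereal) \<Rightarrow> (nat \<Rightarrow> nat \<Rightarrow> ereal) \<Rightarrow> nat \<Rightarrow> nat \<Rightarrow> ereal" where
  "Amax Ap Am i j = max (Ap i j) (Am i j)"

text \<open>The bipartite graph: vertices Inl (Inl k) = u_k (k<p), Inl (Inr j) = j (j<n),
  Inr i = w_i (i<m).\<close>
definition gvert :: "nat \<Rightarrow> nat \<Rightarrow> nat \<Rightarrow> ((nat + nat) + nat) set" where
  "gvert m n p = (Inl \<circ> Inl) ` {..<p} \<union> (Inl \<circ> Inr) ` {..<n} \<union> Inr ` {..<m}"

definition gedge :: "nat \<Rightarrow> nat \<Rightarrow> nat \<Rightarrow> (nat \<Rightarrow> nat \<Rightarrow> ereal) \<Rightarrow> (nat \<Rightarrow> nat \<Rightarrow> ereal)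
    \<Rightarrow> ((nat + nat) + nat) \<Rightarrow> ((nat + nat) + nat) \<Rightarrow> bool" where
  "gedge m n p C A v w \<longleftrightarrow>
     (\<exists>k<p. \<exists>j<n. C k j \<noteq> MInfty \<and>
        ({v, w} = {Inl (Inl k), Inl (Inr j)})) \<or>
     (\<exists>i<m. \<exists>j<n. A i j \<noteq> MInfty \<and>
        ({v, w} = {Inr i, Inl (Inr j)}))"

definition graph_connected :: "nat \<Rightarrow> nat \<Rightarrow> nat \<Rightarrow> (nat \<Rightarrow> nat \<Rightarrow> ereal)
    \<Rightarrow> (nat \<Rightarrow> nat \<Rightarrow> ereal) \<Rightarrow> bool" where
  "graph_connected m n p C A \<longleftrightarrow>
     (\<forall>v\<in>gvert m n p. \<forall>w\<in>gvert m n p. (gedge m n p C A)\<^sup>*\<^sup>* v w)"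

definition local_opt :: "nat \<Rightarrow> nat \<Rightarrow> nat \<Rightarrow> (nat \<Rightarrow> nat \<Rightarrow> ereal) \<Rightarrow> (nat \<Rightarrow> nat \<Rightarrow> ereal)
    \<Rightarrow> (nat \<Rightarrow> nat \<Rightarrow> ereal) \<Rightarrow> (nat \<Rightarrow> nat) \<Rightarrow> (nat \<Rightarrow> nat) \<Rightarrow> (nat \<Rightarrow> real) \<Rightarrow> bool" where
  "local_opt m n p Ap Am C mup mum x \<longleftrightarrow>
     (\<exists>\<delta>>0. \<forall>y. inS m n Ap Am y \<and> (\<forall>j<n. \<bar>x j - y j\<bar> < \<delta>) \<longrightarrow>
        fobj p n C mup mum y \<ge> fobj p n C mup mum x)"

definition chi :: "nat set \<Rightarrow> nat \<Rightarrow> real" where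
  "chi J j = (if j \<in> J then 1 else 0)"

end

theory Submission
  imports Defs
begin

text \<open>
  Near x every tropical row max_j (a_ij + y_j) equals its value at x plus the maximum of
  y_j - x_j over the columns attaining the row maximum at x. Hence, for y close to x,
  f(y) - f(x) = G(y - x) with G(d) = sum_k mu+_k max_(j in Q_k) d_j - sum_j mu-_j d_j, and y lies
  in S iff d = y - x satisfies max_(M_i) d <= max_(P_i) d on every tight row i, where M_i and P_i
  are the argmax sets of the rows of A- and A+. This cone of directions is stable under
  d |-> phi o d for monotone phi, in particular under passing to a level-set indicator
  chi_(d >= t). On the other hand G vanishes on constants, because sum mu+ = sum mu-, and is
  additive on the decomposition d = min(d, s) + (t - s) chi_(d >= t), t > s the two largest
  values of d, since both summands are monotone functions of d. By induction on the number of
  values of d, G(d) < 0 forces G(chi_J) < 0 for some level set J, and x + delta chi_J is then a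
  feasible descent ray.
\<close>

section \<open>Level sets of a max-minus-linear form\<close>

lemma Max_image_mono_comp:
  fixes d :: "'i \<Rightarrow> 'a::linorder" and \<phi> :: "'a \<Rightarrow> 'b::linorder"
  assumes "finite Q" "Q \<noteq> {}" "mono \<phi>" "\<forall>j\<in>Q. d' j = \<phi> (d j)"
  shows "Max (d' ` Q) = \<phi> (Max (d ` Q))"
proof -
  have "d' ` Q = \<phi> ` d ` Q" using assms(4) by (force simp: image_image)
  then show ?thesis using mono_Max_commute[OF assms(3)] assms(1,2) by simp
qed

lemma abs_Max_image_less:
  fixes f :: "'i \<Rightarrow> real"
  assumes "finite A" "A \<noteq> {}" "\<forall>j\<in>A. \<bar>f j\<bar> < e"
  shows "\<bar>Max (f ` A)\<bar> < e"
proof -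
  have "Max (f ` A) \<in> f ` A" using assms(1,2) by simp
  then show ?thesis using assms(3) by auto
qed

text \<open>With Q k the argmax set of row k of C at x, this is the directional derivative of the
  objective f at x.\<close>
definition dir_deriv :: "nat \<Rightarrow> nat \<Rightarrow> (nat \<Rightarrow> nat set) \<Rightarrow> (nat \<Rightarrow> real) \<Rightarrow> (nat \<Rightarrow> real)
    \<Rightarrow> (nat \<Rightarrow> real) \<Rightarrow> real" where
  "dir_deriv p n Q w v d = (\<Sum>k<p. w k * Max (d ` Q k)) - (\<Sum>j<n. v j * d j)"

lemma dir_deriv_const:
  assumes Q: "\<forall>k<p. Q k \<noteq> {} \<and> Q k \<subseteq> {..<n}" and wv: "(\<Sum>k<p. w k) = (\<Sum>j<n. v j)"
    and d: "\<forall>j<n. d j = c"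
  shows "dir_deriv p n Q w v d = 0"
proof -
  have "d ` Q k = {c}" if "k < p" for k
    using Q d that by fastforce
  then have "dir_deriv p n Q w v d = (\<Sum>k<p. w k) * c - (\<Sum>j<n. v j) * c"
    by (simp add: dir_deriv_def d sum_distrib_right)
  then show ?thesis using wv by simp
qed

lemma dir_deriv_scale:
  assumes Q: "\<forall>k<p. Q k \<noteq> {} \<and> Q k \<subseteq> {..<n}" and "0 \<le> c"
  shows "dir_deriv p n Q w v (\<lambda>j. c * d j) = c * dir_deriv p n Q w v d"
proof -
  have "Max ((\<lambda>j. c * d j) ` Q k) = c * Max (d ` Q k)" if "k < p" for k
    using Q that \<open>0 \<le> c\<close>
    by (intro Max_image_mono_comp) (auto simp: mono_def mult_left_mono intro: finite_subset)
  then show ?thesis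
    by (simp add: dir_deriv_def sum_distrib_left right_diff_distrib mult.left_commute)
qed

lemma dir_deriv_comonotone_add:
  assumes Q: "\<forall>k<p. Q k \<noteq> {} \<and> Q k \<subseteq> {..<n}" and "mono \<phi>" "mono \<psi>"
    and decomp: "\<forall>j<n. d1 j = \<phi> (d j) \<and> d2 j = \<psi> (d j) \<and> \<phi> (d j) + \<psi> (d j) = d j"
  shows "dir_deriv p n Q w v d = dir_deriv p n Q w v d1 + dir_deriv p n Q w v d2"
proof -
  have "Max (d ` Q k) = Max (d1 ` Q k) + Max (d2 ` Q k)" if "k < p" for k
  proof -
    have sub: "Q k \<subseteq> {..<n}" and fin: "finite (Q k)" "Q k \<noteq> {}"
      using Q that finite_subset[of "Q k" "{..<n}"] by auto
    have "Max (d1 ` Q k) = \<phi> (Max (d ` Q k))" "Max (d2 ` Q k) = \<psi> (Max (d ` Q k))"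
      using decomp sub by (auto intro!: Max_image_mono_comp fin \<open>mono \<phi>\<close> \<open>mono \<psi>\<close>)
    then have "Max (d1 ` Q k) + Max (d2 ` Q k) = \<phi> (Max (d ` Q k)) + \<psi> (Max (d ` Q k))"
      by simp
    also have "\<dots> = Max (d ` Q k)"
    proof -
      have "Max (d ` Q k) \<in> d ` Q k" using fin by simp
      then show ?thesis using decomp sub by auto
    qed
    finally show ?thesis by simp
  qed
  then have "(\<Sum>k<p. w k * Max (d ` Q k)) =
      (\<Sum>k<p. w k * Max (d1 ` Q k)) + (\<Sum>k<p. w k * Max (d2 ` Q k))"
    unfolding sum.distrib[symmetric] by (intro sum.cong) (auto simp: distrib_left)
  moreover have "(\<Sum>j<n. v j * d j) = (\<Sum>j<n. v j * d1 j) + (\<Sum>j<n. v j * d2 j)"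
    unfolding sum.distrib[symmetric] by (intro sum.cong) (auto simp: decomp simp flip: distrib_left)
  ultimately show ?thesis by (simp add: dir_deriv_def)
qed

lemma dir_deriv_neg_level_set:
  assumes Q: "\<forall>k<p. Q k \<noteq> {} \<and> Q k \<subseteq> {..<n}" and wv: "(\<Sum>k<p. w k) = (\<Sum>j<n. v j)"
    and "dir_deriv p n Q w v d < 0"
  shows "\<exists>t\<in>d ` {..<n}. dir_deriv p n Q w v (chi {j. j < n \<and> t \<le> d j}) < 0"
  using assms(3)
proof (induction "card (d ` {..<n})" arbitrary: d rule: less_induct)
  case less
  let ?G = "dir_deriv p n Q w v"
  define V where "V = d ` {..<n}"
  define t where "t = Max V"
  have "finite V" by (simp add: V_def)
  have "\<exists>u\<in>V. u \<noteq> t"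
  proof (rule ccontr)
    assume "\<not> ?thesis"
    then have "\<forall>j<n. d j = t" by (auto simp: V_def)
    then show False using dir_deriv_const[OF Q wv, of d t] less.prems by simp
  qed
  then have "V - {t} \<noteq> {}" by blast
  define s where "s = Max (V - {t})"
  have "t \<in> V" "s \<in> V" and "s < t"
    using \<open>finite V\<close> \<open>V - {t} \<noteq> {}\<close> Max_in[of "V - {t}"]
    by (auto simp: t_def s_def order.not_eq_order_implies_strict)
  have levels: "u = t \<or> u \<le> s" if "u \<in> V" for u
  proof (cases "u = t")
    case False
    then have "u \<le> s" unfolding s_def by (rule_tac Max_ge) (use \<open>finite V\<close> that in auto)
    then show ?thesis by simp
  qed simp
  then have d_levels: "d j = t \<or> d j \<le> s" if "j < n" for j
    using that by (simp add: V_def)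
  define J where "J = {j. j < n \<and> t \<le> d j}"
  define d' where "d' j = min (d j) s" for j
  define cut where "cut u = (t - s) * (if t \<le> u then 1 else 0)" for u
  have "mono (\<lambda>u. min u s)" "mono cut"
    using \<open>s < t\<close> by (auto simp: mono_def cut_def)
  moreover have "\<forall>j<n. d' j = min (d j) s \<and> (t - s) * chi J j = cut (d j) \<and> min (d j) s + cut (d j) = d j"
    using d_levels \<open>s < t\<close> by (fastforce simp: d'_def J_def chi_def cut_def)
  ultimately have "?G d = ?G d' + ?G (\<lambda>j. (t - s) * chi J j)"
    by (rule dir_deriv_comonotone_add[OF Q])
  then have G_split: "?G d = ?G d' + (t - s) * ?G (chi J)"
    using dir_deriv_scale[OF Q] \<open>s < t\<close> by simp
  show ?case
  proof (cases "?G (chi J) < 0")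
    case True
    then show ?thesis using \<open>t \<in> V\<close> by (auto simp: J_def V_def)
  next
    case False
    then have "0 \<le> (t - s) * ?G (chi J)" using \<open>s < t\<close> by simp
    then have "?G d' < 0" using G_split less.prems by linarith
    have d'_values: "d' ` {..<n} \<subseteq> V - {t}"
      using d_levels \<open>s \<in> V\<close> \<open>s < t\<close> by (force simp: d'_def V_def)
    then have "card (d' ` {..<n}) \<le> card (V - {t})"
      by (intro card_mono) (simp_all add: \<open>finite V\<close>)
    also have "\<dots> < card V"
      using \<open>finite V\<close> \<open>t \<in> V\<close> by (rule card_Diff1_less)
    finally have "card (d' ` {..<n}) < card (d ` {..<n})" by (simp add: V_def)
    then obtain t' where t': "t' \<in> d' ` {..<n}" "?G (chi {j. j < n \<and> t' \<le> d' j}) < 0"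
      using less.hyps \<open>?G d' < 0\<close> by blast
    then have "t' \<in> V - {t}" using d'_values by blast
    then have "t' \<le> s" "t' \<in> V" using levels by auto
    then have "{j. j < n \<and> t' \<le> d' j} = {j. j < n \<and> t' \<le> d j}" by (auto simp: d'_def)
    then show ?thesis using t' \<open>t' \<in> V\<close> by (auto simp: V_def)
  qed
qed

section \<open>Tropical rows near a point\<close>

definition row_argmax :: "nat \<Rightarrow> (nat \<Rightarrow> nat \<Rightarrow> ereal) \<Rightarrow> nat \<Rightarrow> (nat \<Rightarrow> real) \<Rightarrow> nat set" where
  "row_argmax n M i x = {j. j < n \<and> M i j + ereal (x j) = trow n M i x}"

lemma trow_ge: "j < n \<Longrightarrow> M i j + ereal (x j) \<le> trow n M i x"
  unfolding trow_def by (intro Max_ge) auto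

lemma trow_attained: "0 < n \<Longrightarrow> \<exists>j<n. trow n M i x = M i j + ereal (x j)"
proof -
  assume "0 < n"
  then have "trow n M i x \<in> (\<lambda>j. M i j + ereal (x j)) ` {..<n}"
    unfolding trow_def by (intro Max_in) auto
  then show ?thesis by auto
qed

lemma trow_eqI:
  "j < n \<Longrightarrow> M i j + ereal (x j) = v \<Longrightarrow> (\<forall>j<n. M i j + ereal (x j) \<le> v) \<Longrightarrow> trow n M i x = v"
  unfolding trow_def by (intro Max_eqI) auto

lemma trow_neq_PInfty: "0 < n \<Longrightarrow> \<forall>j<n. M i j \<noteq> \<infinity> \<Longrightarrow> trow n M i x \<noteq> \<infinity>"
  using trow_attained[of n M i x] by auto

lemma trow_neq_MInfty: "j < n \<Longrightarrow> M i j \<noteq> -\<infinity> \<Longrightarrow> trow n M i x \<noteq> -\<infinity>"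
  using trow_ge[of j n M i x] by (cases "M i j") auto

lemma row_argmax_subset: "row_argmax n M i x \<subseteq> {..<n}"
  by (auto simp: row_argmax_def)

lemma row_argmax_nonempty: "0 < n \<Longrightarrow> row_argmax n M i x \<noteq> {}"
  using trow_attained[of n M i x] by (auto simp: row_argmax_def)

lemma finite_row_argmax: "finite (row_argmax n M i x)"
  by (rule finite_subset[OF row_argmax_subset]) simp

lemma eventually_ereal_add_less:
  assumes "a + ereal c < ereal \<tau>"
  shows "\<forall>\<^sub>F e in at_right 0. \<forall>u. \<bar>u - c\<bar> < e \<longrightarrow> a + ereal u < ereal (\<tau> - e)"
proof (cases a)
  case (real r)
  then have "0 < (\<tau> - r - c) / 2" using assms by simp
  then show ?thesis
  proof (rule eventually_at_rightI[rotated])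
    fix e assume "e \<in> {0<..<(\<tau> - r - c) / 2}"
    then show "\<forall>u. \<bar>u - c\<bar> < e \<longrightarrow> a + ereal u < ereal (\<tau> - e)"
      using real by (auto simp: abs_less_iff)
  qed
qed (use assms in auto)

lemma trow_local:
  assumes "0 < n" and finite_row: "\<forall>j<n. M i j \<noteq> \<infinity>"
  shows "\<forall>\<^sub>F e in at_right 0. \<forall>z. (\<forall>j<n. \<bar>z j - x j\<bar> < e) \<longrightarrow>
           trow n M i z = trow n M i x + ereal (Max ((\<lambda>j. z j - x j) ` row_argmax n M i x))"
proof (cases "trow n M i x")
  case MInf
  then have "M i j = -\<infinity>" if "j < n" for j
    using trow_ge[OF that, of M i x] by (cases "M i j") auto
  then have "trow n M i z = -\<infinity>" for z
    using trow_attained[OF \<open>0 < n\<close>, of M i z] by auto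
  then show ?thesis using MInf by simp
next
  case PInf
  then show ?thesis using trow_neq_PInfty assms by blast
next
  case (real \<tau>)
  define A where "A = row_argmax n M i x"
  have A: "finite A" "A \<noteq> {}" "A \<subseteq> {..<n}"
    using finite_row_argmax row_argmax_nonempty[OF \<open>0 < n\<close>] row_argmax_subset by (auto simp: A_def)
  have "\<forall>\<^sub>F e in at_right 0. \<forall>j\<in>{..<n} - A. \<forall>u. \<bar>u - x j\<bar> < e \<longrightarrow> M i j + ereal u < ereal (\<tau> - e)"
  proof (intro eventually_ball_finite ballI)
    fix j assume "j \<in> {..<n} - A"
    then have "M i j + ereal (x j) < ereal \<tau>"
      using trow_ge[of j n M i x] real by (auto simp: A_def row_argmax_def)
    then show "\<forall>\<^sub>F e in at_right 0. \<forall>u. \<bar>u - x j\<bar> < e \<longrightarrow> M i j + ereal u < ereal (\<tau> - e)"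
      by (rule eventually_ereal_add_less)
  qed simp
  with eventually_at_right_less[of "0::real"] show ?thesis
  proof eventually_elim
    case (elim e)
    show ?case
    proof (intro allI impI)
      fix z assume near: "\<forall>j<n. \<bar>z j - x j\<bar> < e"
      define h where "h = Max ((\<lambda>j. z j - x j) ` A)"
      have "\<bar>h\<bar> < e" unfolding h_def using near A by (intro abs_Max_image_less) auto
      have "h \<in> (\<lambda>j. z j - x j) ` A" unfolding h_def using A by (intro Max_in) auto
      then obtain j0 where j0: "j0 \<in> A" "h = z j0 - x j0" by blast
      have on_A: "M i j = ereal (\<tau> - x j)" if "j \<in> A" for j
        using that real by (cases "M i j") (auto simp: A_def row_argmax_def)
      have "trow n M i z = ereal (\<tau> + h)"
      proof (rule trow_eqI)
        show "j0 < n" using j0 A by auto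
        show "M i j0 + ereal (z j0) = ereal (\<tau> + h)" using on_A[OF j0(1)] j0 by simp
        show "\<forall>j<n. M i j + ereal (z j) \<le> ereal (\<tau> + h)"
        proof (intro allI impI)
          fix j assume "j < n"
          show "M i j + ereal (z j) \<le> ereal (\<tau> + h)"
          proof (cases "j \<in> A")
            case True
            have "z j - x j \<le> h" unfolding h_def using A True by (intro Max_ge) auto
            then show ?thesis using on_A[OF True] by simp
          next
            case False
            then have "M i j + ereal (z j) < ereal (\<tau> - e)" using elim near \<open>j < n\<close> by auto
            also have "\<dots> \<le> ereal (\<tau> + h)" using \<open>\<bar>h\<bar> < e\<close> by simp
            finally show ?thesis by simp
          qed
        qed
      qed
      then show "trow n M i z = trow n M i x + ereal (Max ((\<lambda>j. z j - x j) ` row_argmax n M i x))"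
        using real by (simp add: h_def A_def)
    qed
  qed
qed

section \<open>Local description of the feasible set and the objective\<close>

lemma row_constraint_local:
  assumes "0 < n" "\<forall>j<n. Ap i j \<noteq> \<infinity>" "\<forall>j<n. Am i j \<noteq> \<infinity>"
    and row: "trow n Am i x \<le> trow n Ap i x"
  shows "\<forall>\<^sub>F e in at_right 0. \<forall>z. (\<forall>j<n. \<bar>z j - x j\<bar> < e) \<longrightarrow>
    (trow n Am i z \<le> trow n Ap i z \<longleftrightarrow>
      (trow n Am i x = trow n Ap i x \<and> trow n Am i x \<noteq> -\<infinity> \<longrightarrow>
        Max ((\<lambda>j. z j - x j) ` row_argmax n Am i x) \<le> Max ((\<lambda>j. z j - x j) ` row_argmax n Ap i x)))"
proof -
  let ?hP = "\<lambda>z. Max ((\<lambda>j. z j - x j) ` row_argmax n Ap i x)"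
  let ?hM = "\<lambda>z. Max ((\<lambda>j. z j - x j) ` row_argmax n Am i x)"
  have small: "\<bar>?hP z\<bar> < e \<and> \<bar>?hM z\<bar> < e" if "\<forall>j<n. \<bar>z j - x j\<bar> < e" for z e
    using that row_argmax_subset row_argmax_nonempty[OF \<open>0 < n\<close>]
    by (auto intro!: abs_Max_image_less simp: finite_row_argmax subset_iff)
  have local: "\<forall>\<^sub>F e in at_right 0. \<forall>z. (\<forall>j<n. \<bar>z j - x j\<bar> < e) \<longrightarrow>
      trow n Ap i z = trow n Ap i x + ereal (?hP z) \<and> trow n Am i z = trow n Am i x + ereal (?hM z)"
    using eventually_conj[OF trow_local[where M = Ap and i = i and x = x, OF \<open>0 < n\<close> assms(2)]
        trow_local[where M = Am and i = i and x = x, OF \<open>0 < n\<close> assms(3)]]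
    by (rule eventually_mono) blast
  show ?thesis
  proof (cases "trow n Am i x = -\<infinity>")
    case True
    from local show ?thesis by eventually_elim (simp add: True)
  next
    case False
    then obtain b where b: "trow n Am i x = ereal b"
      using trow_neq_PInfty[where M = Am and i = i and x = x, OF assms(1,3)] by (cases "trow n Am i x") auto
    then obtain a where a: "trow n Ap i x = ereal a"
      using row trow_neq_PInfty[where M = Ap and i = i and x = x, OF assms(1,2)] by (cases "trow n Ap i x") auto
    show ?thesis
    proof (cases "a = b")
      case True
      from local show ?thesis by eventually_elim (simp add: a b True)
    next
      case False
      then have "b < a" using row a b by simp
      have "\<forall>\<^sub>F e in at_right 0. e < (a - b) / 2"
        using \<open>b < a\<close> by (intro eventually_at_rightI[of 0 "(a - b) / 2"]) auto
      with local show ?thesis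
      proof eventually_elim
        case (elim e)
        show ?case
        proof (intro allI impI)
          fix z assume "\<forall>j<n. \<bar>z j - x j\<bar> < e"
          then have "b + ?hM z \<le> a + ?hP z" using small[of z e] elim by (simp add: abs_less_iff)
          then show "trow n Am i z \<le> trow n Ap i z \<longleftrightarrow>
              (trow n Am i x = trow n Ap i x \<and> trow n Am i x \<noteq> -\<infinity> \<longrightarrow> ?hM z \<le> ?hP z)"
            using elim \<open>\<forall>j<n. \<bar>z j - x j\<bar> < e\<close> a b \<open>a \<noteq> b\<close> by simp
        qed
      qed
    qed
  qed
qed

definition feasible_dir :: "nat \<Rightarrow> nat \<Rightarrow> (nat \<Rightarrow> nat \<Rightarrow> ereal) \<Rightarrow> (nat \<Rightarrow> nat \<Rightarrow> ereal)
    \<Rightarrow> (nat \<Rightarrow> real) \<Rightarrow> (nat \<Rightarrow> real) \<Rightarrow> bool" where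
  "feasible_dir m n Ap Am x d \<longleftrightarrow>
     (\<forall>i<m. trow n Am i x = trow n Ap i x \<and> trow n Am i x \<noteq> -\<infinity> \<longrightarrow>
        Max (d ` row_argmax n Am i x) \<le> Max (d ` row_argmax n Ap i x))"

lemma inS_local:
  assumes "0 < n" "\<forall>i<m. \<forall>j<n. Ap i j \<noteq> \<infinity>" "\<forall>i<m. \<forall>j<n. Am i j \<noteq> \<infinity>"
    and "inS m n Ap Am x"
  shows "\<forall>\<^sub>F e in at_right 0. \<forall>z. (\<forall>j<n. \<bar>z j - x j\<bar> < e) \<longrightarrow>
    (inS m n Ap Am z \<longleftrightarrow> feasible_dir m n Ap Am x (\<lambda>j. z j - x j))"
proof -
  have "\<forall>\<^sub>F e in at_right 0. \<forall>i\<in>{..<m}. \<forall>z. (\<forall>j<n. \<bar>z j - x j\<bar> < e) \<longrightarrow>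
    (trow n Am i z \<le> trow n Ap i z \<longleftrightarrow>
      (trow n Am i x = trow n Ap i x \<and> trow n Am i x \<noteq> -\<infinity> \<longrightarrow>
        Max ((\<lambda>j. z j - x j) ` row_argmax n Am i x) \<le> Max ((\<lambda>j. z j - x j) ` row_argmax n Ap i x)))"
    using assms by (intro eventually_ball_finite ballI row_constraint_local) (auto simp: inS_def)
  then show ?thesis
    by eventually_elim (auto simp: inS_def feasible_dir_def)
qed

lemma feasible_dir_mono_comp:
  assumes "0 < n" "feasible_dir m n Ap Am x d" "mono \<phi>" "\<forall>j<n. d' j = \<phi> (d j)"
  shows "feasible_dir m n Ap Am x d'"
proof -
  have comp: "Max (d' ` row_argmax n M i x) = \<phi> (Max (d ` row_argmax n M i x))" for M i
    using assms(1,3,4) row_argmax_subset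
    by (intro Max_image_mono_comp) (auto simp: finite_row_argmax row_argmax_nonempty subset_iff)
  show ?thesis
    using assms(2) \<open>mono \<phi>\<close> by (auto simp: feasible_dir_def comp monoD)
qed

lemma fobj_less_local:
  assumes "0 < n" "\<forall>k<p. \<forall>j<n. C k j \<noteq> \<infinity>" "\<forall>k<p. \<exists>j<n. C k j \<noteq> -\<infinity>"
  shows "\<forall>\<^sub>F e in at_right 0. \<forall>z. (\<forall>j<n. \<bar>z j - x j\<bar> < e) \<longrightarrow>
    (fobj p n C mup mum z < fobj p n C mup mum x \<longleftrightarrow>
     dir_deriv p n (\<lambda>k. row_argmax n C k x) (\<lambda>k. real (mup k)) (\<lambda>j. real (mum j)) (\<lambda>j. z j - x j) < 0)"
proof -
  define r where "r k = real_of_ereal (trow n C k x)" for k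
  have r: "trow n C k x = ereal (r k)" if k: "k < p" for k
  proof -
    obtain j where "j < n" "C k j \<noteq> -\<infinity>" using assms(3) k by blast
    then have "trow n C k x \<noteq> -\<infinity>" by (rule trow_neq_MInfty)
    moreover have "trow n C k x \<noteq> \<infinity>" using assms(1,2) k by (intro trow_neq_PInfty) auto
    ultimately show ?thesis by (cases "trow n C k x") (auto simp: r_def)
  qed
  have "(\<Sum>k<p. ereal (real (mup k)) * trow n C k x) = (\<Sum>k<p. ereal (real (mup k) * r k))"
    by (intro sum.cong) (simp_all add: r)
  then have fobj_x: "fobj p n C mup mum x = ereal ((\<Sum>k<p. real (mup k) * r k) - (\<Sum>j<n. real (mum j) * x j))"
    unfolding fobj_def by simp
  have "\<forall>\<^sub>F e in at_right 0. \<forall>k\<in>{..<p}. \<forall>z. (\<forall>j<n. \<bar>z j - x j\<bar> < e) \<longrightarrow>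
      trow n C k z = trow n C k x + ereal (Max ((\<lambda>j. z j - x j) ` row_argmax n C k x))"
    using assms(1,2) by (intro eventually_ball_finite ballI trow_local) auto
  then show ?thesis
  proof eventually_elim
    case (elim e)
    show ?case
    proof (intro allI impI)
      fix z assume "\<forall>j<n. \<bar>z j - x j\<bar> < e"
      let ?h = "\<lambda>k. Max ((\<lambda>j. z j - x j) ` row_argmax n C k x)"
      have "(\<Sum>k<p. ereal (real (mup k)) * trow n C k z) = (\<Sum>k<p. ereal (real (mup k) * (r k + ?h k)))"
        using elim \<open>\<forall>j<n. \<bar>z j - x j\<bar> < e\<close> by (intro sum.cong) (simp_all add: r)
      then have "fobj p n C mup mum z =
          ereal ((\<Sum>k<p. real (mup k) * (r k + ?h k)) - (\<Sum>j<n. real (mum j) * z j))"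
        unfolding fobj_def by simp
      moreover have "(\<Sum>k<p. real (mup k) * (r k + ?h k)) - (\<Sum>j<n. real (mum j) * z j) =
          (\<Sum>k<p. real (mup k) * r k) - (\<Sum>j<n. real (mum j) * x j) +
          dir_deriv p n (\<lambda>k. row_argmax n C k x) (\<lambda>k. real (mup k)) (\<lambda>j. real (mum j)) (\<lambda>j. z j - x j)"
        by (simp add: dir_deriv_def distrib_left sum.distrib right_diff_distrib sum_subtractf)
      ultimately show "fobj p n C mup mum z < fobj p n C mup mum x \<longleftrightarrow>
          dir_deriv p n (\<lambda>k. row_argmax n C k x) (\<lambda>k. real (mup k)) (\<lambda>j. real (mum j)) (\<lambda>j. z j - x j) < 0"
        by (simp add: fobj_x)
    qed
  qed
qed

lemma feasible_descent_level_set: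
  assumes "0 < n" and Q: "\<forall>k<p. Q k \<noteq> {} \<and> Q k \<subseteq> {..<n}" and wv: "(\<Sum>k<p. w k) = (\<Sum>j<n. v j)"
    and feasible: "feasible_dir m n Ap Am x d" and "dir_deriv p n Q w v d < 0"
  shows "\<exists>J\<subseteq>{..<n}. \<forall>\<delta>>0. feasible_dir m n Ap Am x (\<lambda>j. \<delta> * chi J j) \<and>
           dir_deriv p n Q w v (\<lambda>j. \<delta> * chi J j) < 0"
proof -
  obtain t where t: "dir_deriv p n Q w v (chi {j. j < n \<and> t \<le> d j}) < 0"
    using dir_deriv_neg_level_set[OF Q wv \<open>dir_deriv p n Q w v d < 0\<close>] by blast
  define J where "J = {j. j < n \<and> t \<le> d j}"
  have "feasible_dir m n Ap Am x (\<lambda>j. \<delta> * chi J j) \<and> dir_deriv p n Q w v (\<lambda>j. \<delta> * chi J j) < 0"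
    if "0 < \<delta>" for \<delta> :: real
  proof
    show "feasible_dir m n Ap Am x (\<lambda>j. \<delta> * chi J j)"
      by (rule feasible_dir_mono_comp[OF \<open>0 < n\<close> feasible, of "\<lambda>u. \<delta> * (if t \<le> u then 1 else 0)"])
        (use \<open>0 < \<delta>\<close> in \<open>auto simp: mono_def chi_def J_def\<close>)
    show "dir_deriv p n Q w v (\<lambda>j. \<delta> * chi J j) < 0"
      using dir_deriv_scale[OF Q] \<open>0 < \<delta>\<close> t by (simp add: J_def mult_pos_neg)
  qed
  moreover have "J \<subseteq> {..<n}" by (auto simp: J_def)
  ultimately show ?thesis by blast
qed

theorem theorem1p1:
  fixes m n p :: nat
    and Ap Am C :: "nat \<Rightarrow> nat \<Rightarrow> ereal"
    and mup mum :: "nat \<Rightarrow> nat"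
    and x :: "nat \<Rightarrow> real"
  assumes Ap_Rmax: "\<forall>i<m. \<forall>j<n. in_Rmax (Ap i j)"
    and Am_Rmax: "\<forall>i<m. \<forall>j<n. in_Rmax (Am i j)"
    and C_Rmax: "\<forall>k<p. \<forall>j<n. in_Rmax (C k j)"
    and A_rows: "\<forall>i<m. \<exists>j<n. Amax Ap Am i j \<noteq> MInfty"
    and C_rows: "\<forall>k<p. \<exists>j<n. C k j \<noteq> MInfty"
    and mu_sum: "(\<Sum>k<p. mup k) = (\<Sum>j<n. mum j)"
    and conn: "graph_connected m n p C (Amax Ap Am)"
    and xS: "inS m n Ap Am x"
    and notopt: "\<not> local_opt m n p Ap Am C mup mum x"
  shows "\<exists>J\<subseteq>{..<n}. \<exists>\<delta>'>0. \<forall>\<delta>. 0 < \<delta> \<and> \<delta> < \<delta>' \<longrightarrow>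
           inS m n Ap Am (\<lambda>j. x j + \<delta> * chi J j) \<and>
           fobj p n C mup mum (\<lambda>j. x j + \<delta> * chi J j) < fobj p n C mup mum x"
proof -
  have "0 < n"
  proof (rule ccontr)
    assume "\<not> 0 < n"
    then have "n = 0" "p = 0" using C_rows by auto
    then have "local_opt m n p Ap Am C mup mum x" by (auto simp: local_opt_def fobj_def intro: exI[of _ 1])
    with notopt show False ..
  qed
  have Ap_fin: "\<forall>i<m. \<forall>j<n. Ap i j \<noteq> \<infinity>" and Am_fin: "\<forall>i<m. \<forall>j<n. Am i j \<noteq> \<infinity>"
    and C_fin: "\<forall>k<p. \<forall>j<n. C k j \<noteq> \<infinity>" and C_rows': "\<forall>k<p. \<exists>j<n. C k j \<noteq> -\<infinity>"
    using Ap_Rmax Am_Rmax C_Rmax C_rows by (simp_all add: in_Rmax_def)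
  define Q where "Q = (\<lambda>k. row_argmax n C k x)"
  define G where "G = dir_deriv p n Q (\<lambda>k. real (mup k)) (\<lambda>j. real (mum j))"
  have Q: "\<forall>k<p. Q k \<noteq> {} \<and> Q k \<subseteq> {..<n}"
    using \<open>0 < n\<close> by (simp add: Q_def row_argmax_nonempty row_argmax_subset)
  have "\<forall>\<^sub>F e in at_right 0. 0 < e \<and> (\<forall>z. (\<forall>j<n. \<bar>z j - x j\<bar> < e) \<longrightarrow>
      (inS m n Ap Am z \<longleftrightarrow> feasible_dir m n Ap Am x (\<lambda>j. z j - x j)) \<and>
      (fobj p n C mup mum z < fobj p n C mup mum x \<longleftrightarrow> G (\<lambda>j. z j - x j) < 0))"
    using eventually_at_right_less inS_local[OF \<open>0 < n\<close> Ap_fin Am_fin xS]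
      fobj_less_local[where x = x and mup = mup and mum = mum, OF \<open>0 < n\<close> C_fin C_rows']
    by eventually_elim (auto simp: G_def Q_def)
  then obtain e where "0 < e" and near: "\<And>z. \<forall>j<n. \<bar>z j - x j\<bar> < e \<Longrightarrow>
      (inS m n Ap Am z \<longleftrightarrow> feasible_dir m n Ap Am x (\<lambda>j. z j - x j)) \<and>
      (fobj p n C mup mum z < fobj p n C mup mum x \<longleftrightarrow> G (\<lambda>j. z j - x j) < 0)"
    using eventually_happens'[OF trivial_limit_at_right_real] by blast
  obtain y where y: "inS m n Ap Am y" "\<forall>j<n. \<bar>y j - x j\<bar> < e"
      "fobj p n C mup mum y < fobj p n C mup mum x"
    using notopt \<open>0 < e\<close> by (auto simp: local_opt_def not_le abs_minus_commute)
  have feasible: "feasible_dir m n Ap Am x (\<lambda>j. y j - x j)" and descent: "G (\<lambda>j. y j - x j) < 0"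
    using near[OF y(2)] y(1,3) by simp_all
  have mu_real: "(\<Sum>k<p. real (mup k)) = (\<Sum>j<n. real (mum j))"
    using mu_sum by (metis of_nat_sum)
  from feasible_descent_level_set[OF \<open>0 < n\<close> Q mu_real feasible descent[unfolded G_def]]
  obtain J where "J \<subseteq> {..<n}" and J: "\<And>\<delta>. 0 < \<delta> \<Longrightarrow>
      feasible_dir m n Ap Am x (\<lambda>j. \<delta> * chi J j) \<and> G (\<lambda>j. \<delta> * chi J j) < 0"
    unfolding G_def by blast
  have "inS m n Ap Am (\<lambda>j. x j + \<delta> * chi J j) \<and>
      fobj p n C mup mum (\<lambda>j. x j + \<delta> * chi J j) < fobj p n C mup mum x" if "0 < \<delta>" "\<delta> < e" for \<delta>
  proof -
    have "\<forall>j<n. \<bar>x j + \<delta> * chi J j - x j\<bar> < e" using that by (simp add: chi_def)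
    then show ?thesis using near J[OF \<open>0 < \<delta>\<close>] by simp
  qed
  then show ?thesis using \<open>J \<subseteq> {..<n}\<close> \<open>0 < e\<close> by blast
qed

end
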